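(* Let $D\subset\mathbb{R}^{n+1}$ be a domain with upper base $\gamma(D)$, and let $F=F(x,t,X):D\times\mathcal{S}_n\to\mathbb{R}$ satisfy, for constants $0<\lambda\le\Lambda$, $\lambda\,\mathrm{Tr}(N)\le F(x,t,M+N)-F(x,t,M)\le\Lambda\,\mathrm{Tr}(N)$ for all $(x,t)\in D$ and $M,N\in\mathcal{S}_n$ with $N\ge0$, and $F(x,t,0)=0$. Let $u$ be a continuous viscosity subsolution (resp. supersolution) of $F(x,t,D^2u)-\partial_tu=0$ in $D\cup\gamma(D)$ attaining its maximum (resp. minimum) $M$ over $D\cup\gamma(D)$ at some point $(x_0,t_0)\in D\cup\gamma(D)$ (no sign condition on $M$). Then $u\equiv M$ in the subdomain of $D$ subordinate to $(x_0,t_0)$, i.e. at every point of $D$ that can be joined to $(x_0,t_0)$ by a broken line lying in $D\cup\gamma(D)$ (except possibly at $(x_0,t_0)$), uniquely projected onto the $t$-axis and having $(x_0,t_0)$ as upper end-point.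
   Context: $\mathcal{S}_n$ is the space of real symmetric $n\times n$ matrices. Cylinders: $\mathbb{Q}^{t_1,t_2}_{x,R}=\{(y,s):|y-x|<R,\ t_1<s<t_2\}$. Upper base $\gamma(D)$: the set of points $(x,t)\in\partial D$ for which there is $h>0$ such that $\mathbb{Q}^{t-h,t}_{x,h}\subset D$ while $\mathbb{Q}^{t,t+h}_{x,h}$ lies outside $D$. A broken line is uniquely projected onto the $t$-axis if distinct points of it have distinct $t$-coordinates. *)

theory Defs
  imports "HOL-Analysis.Analysis"
begin

text \<open>Points of R^(n+1) are pairs (x,t) with x :: real^'n and t :: real.
  S_n is represented by the matrices X :: real^'n^'n with transpose X = X.\<close>

definition symmetric_mat :: "real^'n^'n \<Rightarrow> bool" where
  "symmetric_mat X \<longleftrightarrow> transpose X = X"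

definition psd :: "real^'n^'n \<Rightarrow> bool" where
  "psd N \<longleftrightarrow> (\<forall>v. v \<bullet> (N *v v) \<ge> 0)"

definition cyl :: "real \<Rightarrow> real \<Rightarrow> real^'n \<Rightarrow> real \<Rightarrow> ((real^'n) \<times> real) set" where
  "cyl t1 t2 x R = {(y,s). dist y x < R \<and> t1 < s \<and> s < t2}"

definition upper_base :: "((real^'n) \<times> real) set \<Rightarrow> ((real^'n) \<times> real) set" where
  "upper_base D = {(x,t). (x,t) \<in> frontier D \<and>
      (\<exists>h>0. cyl (t - h) t x h \<subseteq> D \<and> cyl t (t + h) x h \<inter> D = {})}"

definition test_fun ::
  "(real^'n \<Rightarrow> real \<Rightarrow> real) \<Rightarrow> (real^'n \<Rightarrow> real \<Rightarrow> real^'n) \<Rightarrow>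
   (real^'n \<Rightarrow> real \<Rightarrow> real^'n^'n) \<Rightarrow> (real^'n \<Rightarrow> real \<Rightarrow> real) \<Rightarrow>
   ((real^'n) \<times> real) \<Rightarrow> bool" where
  "test_fun \<phi> Dx Hx Dt p \<longleftrightarrow> (\<exists>U. open U \<and> p \<in> U \<and>
     (\<forall>(y,s)\<in>U.
        ((\<lambda>z. \<phi> z s) has_derivative (\<lambda>v. Dx y s \<bullet> v)) (at y) \<and>
        ((\<lambda>z. Dx z s) has_derivative (\<lambda>v. Hx y s *v v)) (at y) \<and>
        ((\<lambda>r. \<phi> y r) has_real_derivative Dt y s) (at s)) \<and>
     continuous_on U (\<lambda>(y,s). \<phi> y s) \<and>
     continuous_on U (\<lambda>(y,s). Dx y s) \<and>
     continuous_on U (\<lambda>(y,s). Hx y s) \<and>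
     continuous_on U (\<lambda>(y,s). Dt y s))"

definition visc_sub ::
  "(real^'n \<Rightarrow> real \<Rightarrow> real^'n^'n \<Rightarrow> real) \<Rightarrow> ((real^'n) \<times> real) set \<Rightarrow>
   ((real^'n) \<times> real \<Rightarrow> real) \<Rightarrow> bool" where
  "visc_sub F Om u \<longleftrightarrow> (\<forall>x0 t0 \<phi> Dx Hx Dt. (x0,t0) \<in> Om \<longrightarrow>
      test_fun \<phi> Dx Hx Dt (x0,t0) \<longrightarrow>
      (\<exists>r>0. \<forall>(y,s)\<in>Om \<inter> ball (x0,t0) r. u (y,s) - \<phi> y s \<le> u (x0,t0) - \<phi> x0 t0) \<longrightarrow>
      F x0 t0 (Hx x0 t0) - Dt x0 t0 \<ge> 0)"

definition visc_super ::
  "(real^'n \<Rightarrow> real \<Rightarrow> real^'n^'n \<Rightarrow> real) \<Rightarrow> ((real^'n) \<times> real) set \<Rightarrow>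
   ((real^'n) \<times> real \<Rightarrow> real) \<Rightarrow> bool" where
  "visc_super F Om u \<longleftrightarrow> (\<forall>x0 t0 \<phi> Dx Hx Dt. (x0,t0) \<in> Om \<longrightarrow>
      test_fun \<phi> Dx Hx Dt (x0,t0) \<longrightarrow>
      (\<exists>r>0. \<forall>(y,s)\<in>Om \<inter> ball (x0,t0) r. u (y,s) - \<phi> y s \<ge> u (x0,t0) - \<phi> x0 t0) \<longrightarrow>
      F x0 t0 (Hx x0 t0) - Dt x0 t0 \<le> 0)"

definition broken_line :: "('a::real_vector) list \<Rightarrow> 'a set" where
  "broken_line ps = set ps \<union> (\<Union>i<length ps - 1. closed_segment (ps ! i) (ps ! Suc i))"

definition subordinate :: "((real^'n) \<times> real) set \<Rightarrow> ((real^'n) \<times> real) \<Rightarrow> ((real^'n) \<times> real) set" where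
  "subordinate D p0 = {q \<in> D. \<exists>ps. ps \<noteq> [] \<and> hd ps = q \<and> last ps = p0 \<and>
      broken_line ps \<subseteq> D \<union> upper_base D \<and> inj_on snd (broken_line ps) \<and> snd q \<le> snd p0}"

end

theory Submission
  imports Defs
begin

(*
  A subsolution that attains its maximum M at (x1,t1) equals M on a lower half-cylinder
  below (x1,t1). Otherwise u(y0,s0) < M at some point of the cylinder, and one compares u
  on a compact tube with the barrier
      -del e^(-L(s-s0)) (exp(-al |y - z(s)|^2) - exp(-al r^2)) + eta e^(be (s - sc)),
  a Gaussian bump whose centre z(s) moves from y0 at time s0 to x1 at time sc.
  For al and L large, uniform ellipticity makes it a strict supersolution wherever it is
  negative, so it cannot touch u - M from above; hence u(x1,sc) <= M - c0 for all sc
  close to t1 with c0 > 0 independent of sc, contradicting continuity at (x1,t1).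
  A broken line uniquely projected onto the t-axis is a continuous graph over a time
  interval, along which these cylinders propagate M downwards from the upper end-point.
  For supersolutions pass to -u and the operator X |-> -F(-X).
*)

definition elliptic_bounds :: "real \<Rightarrow> real \<Rightarrow> (real^'n^'n \<Rightarrow> real) \<Rightarrow> bool" where
  "elliptic_bounds lam Lam G \<longleftrightarrow> (\<forall>X N. symmetric_mat X \<longrightarrow> symmetric_mat N \<longrightarrow> psd N \<longrightarrow>
     lam * trace N \<le> G (X + N) - G X \<and> G (X + N) - G X \<le> Lam * trace N)"

definition outer :: "real^'n \<Rightarrow> real^'n^'n" where
  "outer w = (\<chi> i j. w$i * w$j)"

lemma outer_mult: "outer w *v v = (w \<bullet> v) *\<^sub>R w"
  by (simp add: outer_def matrix_vector_mult_def inner_vec_def vec_eq_iff sum_distrib_left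
      sum_distrib_right mult_ac)

lemma symmetric_mat_outer: "symmetric_mat (outer w)"
  by (simp add: symmetric_mat_def outer_def transpose_def vec_eq_iff mult.commute)

lemma psd_outer: "psd (outer w)"
  by (simp add: psd_def outer_mult inner_commute)

lemma trace_outer: "trace (outer w) = w \<bullet> w"
  by (simp add: trace_def outer_def inner_vec_def)

lemma symmetric_mat_scaleR: "symmetric_mat A \<Longrightarrow> symmetric_mat (c *\<^sub>R A)"
  by (simp add: symmetric_mat_def transpose_def vec_eq_iff)

lemma psd_scaleR: "psd A \<Longrightarrow> 0 \<le> c \<Longrightarrow> psd (c *\<^sub>R A)"
  by (simp add: psd_def flip: scaleR_matrix_vector_assoc)

lemma trace_scaleR: "trace (c *\<^sub>R (A::real^'n^'n)) = c * trace A"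
  by (simp add: trace_def sum_distrib_left)

lemma symmetric_mat_diff: "symmetric_mat A \<Longrightarrow> symmetric_mat B \<Longrightarrow> symmetric_mat (A - B)"
  by (simp add: symmetric_mat_def transpose_def vec_eq_iff)

lemma elliptic_bounds_dual:
  fixes G :: "real^'n^'n \<Rightarrow> real"
  assumes "elliptic_bounds lam Lam G"
  shows "elliptic_bounds lam Lam (\<lambda>X. - G (- X))"
  unfolding elliptic_bounds_def
proof (intro allI impI)
  fix X N :: "real^'n^'n" assume X: "symmetric_mat X" and N: "symmetric_mat N" "psd N"
  have "symmetric_mat (- (X + N))"
    using X N by (simp add: symmetric_mat_def transpose_def vec_eq_iff)
  then have "lam * trace N \<le> G (- (X + N) + N) - G (- (X + N)) \<and>
      G (- (X + N) + N) - G (- (X + N)) \<le> Lam * trace N"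
    using assms N unfolding elliptic_bounds_def by blast
  moreover have "- (X + N) + N = - X" by (simp add: algebra_simps)
  ultimately show "lam * trace N \<le> - G (- (X + N)) - - G (- X) \<and> - G (- (X + N)) - - G (- X) \<le> Lam * trace N"
    by simp
qed

lemma elliptic_bounds_id_minus_outer:
  fixes G :: "real^'n^'n \<Rightarrow> real"
  assumes G: "elliptic_bounds lam Lam G" "G 0 = 0" and "0 \<le> c" "0 \<le> k"
  shows "G (c *\<^sub>R mat 1 - k *\<^sub>R outer w) \<le> Lam * c * CARD('n) - lam * k * (w \<bullet> w)"
proof -
  have "symmetric_mat (mat 1::real^'n^'n)" "psd (mat 1::real^'n^'n)"
    by (simp_all add: symmetric_mat_def psd_def)
  then have sP: "symmetric_mat (c *\<^sub>R (mat 1::real^'n^'n))" and pP: "psd (c *\<^sub>R (mat 1::real^'n^'n))"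
    using \<open>0 \<le> c\<close> by (simp_all add: symmetric_mat_scaleR psd_scaleR)
  have sN: "symmetric_mat (k *\<^sub>R outer w)" and pN: "psd (k *\<^sub>R outer w)"
    using \<open>0 \<le> k\<close> by (simp_all add: symmetric_mat_scaleR symmetric_mat_outer psd_scaleR psd_outer)
  have "symmetric_mat (0::real^'n^'n)"
    by (simp add: symmetric_mat_def transpose_def vec_eq_iff)
  then have "G (0 + c *\<^sub>R mat 1) - G 0 \<le> Lam * trace (c *\<^sub>R (mat 1::real^'n^'n))"
    using G(1) sP pP unfolding elliptic_bounds_def by blast
  moreover have "lam * trace (k *\<^sub>R outer w)
      \<le> G ((c *\<^sub>R mat 1 - k *\<^sub>R outer w) + k *\<^sub>R outer w) - G (c *\<^sub>R mat 1 - k *\<^sub>R outer w)"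
    using G(1) symmetric_mat_diff[OF sP sN] sN pN unfolding elliptic_bounds_def by blast
  ultimately show ?thesis
    using G(2) by (simp add: trace_scaleR trace_outer trace_I)
qed

lemma gaussian_barrier_ineq:
  fixes lam Lam n r Vb al L nw wv :: real
  assumes "0 < lam" "0 \<le> Lam" "0 \<le> n" "0 < r" "0 \<le> Vb" "0 < al"
    and al_large: "2*Lam*n + 2*r*Vb < al*lam*r^2" "2 \<le> al*r^2"
    and L_large: "4*al*(Lam*n + r*Vb) < L"
    and nw: "0 \<le> nw" "nw < r" and wv: "wv \<le> nw * Vb"
  shows "exp (-al*nw^2) * (2*al*Lam*n - 4*al^2*lam*nw^2 + 2*al*wv)
    < L * (exp (-al*nw^2) - exp (-al*r^2))"
proof -
  define E where "E = exp (-al*nw^2)"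
  have E: "0 < E" "exp (-al*r^2) < E"
    using nw \<open>0 < al\<close> by (auto simp: E_def power_strict_mono)
  have "wv \<le> r*Vb"
    using wv mult_right_mono[of nw r Vb] nw \<open>0 \<le> Vb\<close> by linarith
  then have wv_r: "2*al*wv \<le> 2*al*(r*Vb)"
    using \<open>0 < al\<close> by simp
  have "0 \<le> 4*al*(Lam*n + r*Vb)"
    using \<open>0 < al\<close> \<open>0 \<le> Lam\<close> \<open>0 \<le> n\<close> \<open>0 < r\<close> \<open>0 \<le> Vb\<close> by simp
  then have L: "0 < L"
    using L_large by linarith
  show ?thesis
  proof (cases "r/2 \<le> nw")
    case True
    \<comment> \<open>far from the centre the bracket is negative\<close>
    have "r^2/4 \<le> nw^2"
      using power_mono[OF True, of 2] \<open>0 < r\<close> by (simp add: power_divide)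
    then have "(al^2*lam)*r^2 \<le> (al^2*lam)*(4*nw^2)"
      using \<open>0 < lam\<close> by (intro mult_left_mono) auto
    moreover have "al*(2*Lam*n + 2*r*Vb) < al*(al*lam*r^2)"
      using al_large(1) \<open>0 < al\<close> by simp
    ultimately have "2*al*Lam*n - 4*al^2*lam*nw^2 + 2*al*wv < 0"
      using wv_r by (simp add: power2_eq_square algebra_simps)
    then have "E * (2*al*Lam*n - 4*al^2*lam*nw^2 + 2*al*wv) < 0"
      using E by (simp add: mult_pos_neg)
    also have "0 < L * (E - exp (-al*r^2))"
      using L E by simp
    finally show ?thesis unfolding E_def .
  next
    case False
    \<comment> \<open>near the centre the Gaussian at radius r is at most half of E\<close>
    have "nw^2 \<le> r^2/4"
      using power_mono[of nw "r/2" 2] False nw by (simp add: power_divide)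
    then have "1 \<le> al*(r^2 - nw^2)"
      using al_large(2) \<open>0 < al\<close> mult_left_mono[of "3*r^2/4" "r^2 - nw^2" al] by linarith
    then have "exp (-(al*(r^2 - nw^2))) \<le> exp (-1)"
      by simp
    also have "exp (-1::real) \<le> 1/2"
      using exp_ge_add_one_self[of 1] by (simp add: exp_minus field_simps)
    finally have "E * exp (-(al*(r^2 - nw^2))) \<le> E * (1/2)"
      using E by (intro mult_left_mono) auto
    moreover have "exp (-al*r^2) = E * exp (-(al*(r^2 - nw^2)))"
      by (simp add: E_def algebra_simps flip: exp_add)
    ultimately have "exp (-al*r^2) \<le> E/2"
      by simp
    then have R: "L*E/2 \<le> L*(E - exp (-al*r^2))"
      using L by (simp add: field_simps)
    have "0 \<le> 4*al^2*lam*nw^2"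
      using \<open>0 < lam\<close> by simp
    then have "2*al*Lam*n - 4*al^2*lam*nw^2 + 2*al*wv < L/2"
      using wv_r L_large by (simp add: algebra_simps)
    then have "E * (2*al*Lam*n - 4*al^2*lam*nw^2 + 2*al*wv) < L*E/2"
      using E by (simp add: mult.commute)
    with R show ?thesis unfolding E_def by linarith
  qed
qed

lemma gaussian_barrier_constants:
  fixes lam Lam n r Vb :: real
  assumes "0 < lam" "0 \<le> Lam" "0 \<le> n" "0 < r" "0 \<le> Vb"
  obtains al L where "0 < al" "0 < L"
    "\<And>nw wv. 0 \<le> nw \<Longrightarrow> nw < r \<Longrightarrow> wv \<le> nw * Vb \<Longrightarrow>
       exp (-al*nw^2) * (2*al*Lam*n - 4*al^2*lam*nw^2 + 2*al*wv) < L * (exp (-al*nw^2) - exp (-al*r^2))"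
proof -
  define al where "al = (2*Lam*n + 2*r*Vb + 1)/(lam*r^2) + 2/r^2"
  define L where "L = 4*al*(Lam*n + r*Vb) + 1"
  have alr: "al*r^2 = (2*Lam*n + 2*r*Vb + 1)/lam + 2"
    using \<open>0 < lam\<close> \<open>0 < r\<close> by (simp add: al_def field_simps)
  have al_large: "2*Lam*n + 2*r*Vb < al*lam*r^2" "2 \<le> al*r^2"
  proof -
    show "2*Lam*n + 2*r*Vb < al*lam*r^2"
      using alr assms by (simp add: field_simps)
    show "2 \<le> al*r^2"
      using alr assms by simp
  qed
  have "0 < al"
    using al_large(2) \<open>0 < r\<close> zero_less_mult_pos2[of al "r^2"] by simp
  moreover have "0 \<le> 4*al*(Lam*n + r*Vb)"
    using \<open>0 < al\<close> assms by simp
  then have "0 < L" "4*al*(Lam*n + r*Vb) < L"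
    by (simp_all add: L_def)
  ultimately show thesis
    using that gaussian_barrier_ineq[OF assms \<open>0 < al\<close> al_large] by blast
qed

lemma dist_Pair_le:
  fixes a c :: "'a::real_normed_vector" and b d :: "'b::real_normed_vector"
  shows "dist (a,b) (c,d) \<le> dist a c + dist b d"
  using norm_Pair_le[of "a - c" "b - d"] by (simp add: dist_norm)

definition tube :: "(real \<Rightarrow> 'a::real_normed_vector) \<Rightarrow> real \<Rightarrow> real \<Rightarrow> real \<Rightarrow> ('a \<times> real) set" where
  "tube z r a b = {(y,s). a \<le> s \<and> s \<le> b \<and> norm (y - z s) \<le> r}"

lemma compact_tube:
  fixes z :: "real \<Rightarrow> 'a::euclidean_space"
  assumes "continuous_on UNIV z"
  shows "compact (tube z r a b)"
proof -
  have eq: "tube z r a b = (\<lambda>(w,s). (z s + w, s)) ` (cball 0 r \<times> {a..b})"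
  proof (intro set_eqI iffI)
    fix q assume "q \<in> tube z r a b"
    then show "q \<in> (\<lambda>(w,s). (z s + w, s)) ` (cball 0 r \<times> {a..b})"
      by (intro image_eqI[of _ _ "(fst q - z (snd q), snd q)"]) (auto simp: tube_def)
  qed (auto simp: tube_def)
  have "continuous_on (cball 0 r \<times> {a..b}) (\<lambda>(w,s). (z s + w, s))"
    unfolding split_def by (intro continuous_intros continuous_on_compose2[OF assms]) auto
  then show ?thesis
    unfolding eq by (rule compact_continuous_image) (intro compact_Times compact_cball compact_Icc)
qed

lemma tube_in_cylinder:
  fixes x1 ys :: "real^'n"
  assumes "r + norm (ys - x1) < h" "t1 - h < ss" "ss < sc" "b < t1" "b - ss \<le> 2*(sc - ss)"
  shows "tube (\<lambda>s. ys + ((s - ss)/(sc - ss)) *\<^sub>R (x1 - ys)) r ss b \<subseteq> cyl (t1-h) t1 x1 h"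
proof
  fix q assume "q \<in> tube (\<lambda>s. ys + ((s - ss)/(sc - ss)) *\<^sub>R (x1 - ys)) r ss b"
  then obtain y s where q: "q = (y,s)" and s: "ss \<le> s" "s \<le> b"
    and y: "norm (y - (ys + ((s - ss)/(sc - ss)) *\<^sub>R (x1 - ys))) \<le> r"
    by (auto simp: tube_def)
  define \<mu> where "\<mu> = (s - ss)/(sc - ss)"
  have "0 \<le> \<mu>" "\<mu> \<le> 2"
    using s assms by (auto simp: \<mu>_def divide_simps)
  have "ys + \<mu> *\<^sub>R (x1 - ys) - x1 = (1 - \<mu>) *\<^sub>R (ys - x1)"
    by (simp add: algebra_simps)
  then have "norm (ys + \<mu> *\<^sub>R (x1 - ys) - x1) = \<bar>1 - \<mu>\<bar> * norm (ys - x1)"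
    by simp
  also have "\<dots> \<le> norm (ys - x1)"
    using \<open>0 \<le> \<mu>\<close> \<open>\<mu> \<le> 2\<close> by (intro mult_left_le_one_le) auto
  finally have "dist y x1 < h"
    using norm_triangle_ineq[of "y - (ys + \<mu> *\<^sub>R (x1 - ys))" "ys + \<mu> *\<^sub>R (x1 - ys) - x1"] y assms(1)
    by (simp add: dist_norm \<mu>_def)
  then show "q \<in> cyl (t1-h) t1 x1 h"
    using s assms by (simp add: q cyl_def)
qed

locale moving_gaussian =
  fixes ys V :: "real^'n" and s0 al del L e0 eta be sc :: real
begin

definition center :: "real \<Rightarrow> real^'n" where
  "center s = ys + (s - s0) *\<^sub>R V"

definition gauss :: "real^'n \<Rightarrow> real \<Rightarrow> real" where
  "gauss y s = exp (-al * ((y - center s) \<bullet> (y - center s)))"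

definition amp :: "real \<Rightarrow> real" where
  "amp s = del * exp (-L * (s - s0))"

(* With e0 = exp (-al r^2) the first term is negative exactly inside the tube of radius r
   around the moving centre; the term eta e^(be (s - sc)) is small up to time sc but
   dominates shortly afterwards. *)
definition barrier :: "real^'n \<Rightarrow> real \<Rightarrow> real" where
  "barrier y s = -(amp s * (gauss y s - e0)) + eta * exp (be * (s - sc))"

definition barrier_grad :: "real^'n \<Rightarrow> real \<Rightarrow> real^'n" where
  "barrier_grad y s = (2*al*amp s*gauss y s) *\<^sub>R (y - center s)"

definition barrier_hess :: "real^'n \<Rightarrow> real \<Rightarrow> real^'n^'n" where
  "barrier_hess y s =
     (2*al*amp s*gauss y s) *\<^sub>R mat 1 - (4*al^2*amp s*gauss y s) *\<^sub>R outer (y - center s)"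

definition barrier_dt :: "real^'n \<Rightarrow> real \<Rightarrow> real" where
  "barrier_dt y s = L*amp s*(gauss y s - e0) - 2*al*amp s*gauss y s*((y - center s) \<bullet> V)
     + eta*be*exp (be*(s - sc))"

lemma gauss_eq: "gauss y s = exp (-al * (norm (y - center s))^2)"
  by (simp add: gauss_def power2_norm_eq_inner)

lemma test_fun_barrier: "test_fun barrier barrier_grad barrier_hess barrier_dt p"
  unfolding test_fun_def
proof (intro exI[of _ UNIV] conjI ballI)
  fix q :: "(real^'n) \<times> real"
  obtain y s where q: "q = (y,s)" by fastforce
  have "((\<lambda>x. barrier x s) has_derivative (\<lambda>v. barrier_grad y s \<bullet> v)) (at y)"
    unfolding barrier_def barrier_grad_def gauss_def
    by (rule derivative_eq_intros refl | simp)+ (simp add: fun_eq_iff inner_commute algebra_simps)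
  moreover have "((\<lambda>x. barrier_grad x s) has_derivative (\<lambda>v. barrier_hess y s *v v)) (at y)"
    unfolding barrier_grad_def barrier_hess_def gauss_def
    apply (rule derivative_eq_intros refl | simp)+
    apply (rule ext)
    apply (simp add: matrix_vector_mult_diff_rdistrib outer_mult inner_commute
        flip: scaleR_matrix_vector_assoc)
    by (simp add: power2_eq_square algebra_simps)
  moreover have "((\<lambda>r. barrier y r) has_real_derivative barrier_dt y s) (at s)"
  proof -
    have expand: "\<And>r. (y - center r) \<bullet> (y - center r)
        = (y - ys) \<bullet> (y - ys) - 2*(r - s0)*((y - ys) \<bullet> V) + (r - s0)^2 * (V \<bullet> V)"
      by (simp add: center_def algebra_simps inner_diff_left inner_diff_right power2_eq_square
          inner_commute)
    show ?thesis
      unfolding barrier_def barrier_dt_def gauss_def amp_def expand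
      by (rule derivative_eq_intros refl | simp)+
        (simp add: center_def algebra_simps inner_diff_left inner_diff_right power2_eq_square
          inner_commute)
  qed
  ultimately show "case q of (y, s) \<Rightarrow>
      ((\<lambda>x. barrier x s) has_derivative (\<lambda>v. barrier_grad y s \<bullet> v)) (at y) \<and>
      ((\<lambda>x. barrier_grad x s) has_derivative (\<lambda>v. barrier_hess y s *v v)) (at y) \<and>
      ((\<lambda>r. barrier y r) has_real_derivative barrier_dt y s) (at s)"
    using q by simp
next
  show "continuous_on UNIV (\<lambda>(y, s). barrier y s)"
    unfolding barrier_def gauss_def amp_def center_def split_def by (intro continuous_intros)
  show "continuous_on UNIV (\<lambda>(y, s). barrier_grad y s)"
    unfolding barrier_grad_def gauss_def amp_def center_def split_def by (intro continuous_intros)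
  show "continuous_on UNIV (\<lambda>(y, s). barrier_hess y s)"
    unfolding barrier_hess_def gauss_def amp_def center_def outer_def split_def
    by (intro continuous_intros)
  show "continuous_on UNIV (\<lambda>(y, s). barrier_dt y s)"
    unfolding barrier_dt_def gauss_def amp_def center_def split_def by (intro continuous_intros)
qed auto

lemma amp_gauss_le:
  assumes "0 \<le> del" "0 \<le> L" "s0 \<le> s" "0 \<le> al" "0 \<le> e0"
  shows "amp s * (gauss y s - e0) \<le> del"
proof -
  have amp: "0 \<le> amp s" "amp s \<le> del"
    using assms by (auto simp: amp_def intro: mult_left_le)
  have "0 \<le> al * (norm (y - center s))^2"
    using assms by simp
  then have "gauss y s \<le> 1"
    unfolding gauss_eq by (subst exp_le_one_iff) linarith
  then have "gauss y s - e0 \<le> 1"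
    using \<open>0 \<le> e0\<close> by linarith
  then have "amp s * (gauss y s - e0) \<le> amp s"
    using mult_left_mono[of _ 1 "amp s"] amp by simp
  with amp show ?thesis by linarith
qed

lemma neg_barrier_le:
  assumes "0 \<le> del" "0 \<le> L" "s0 \<le> s" "0 \<le> al" "0 \<le> e0" "0 \<le> eta"
  shows "- barrier y s \<le> del"
proof -
  have "0 \<le> eta * exp (be * (s - sc))"
    using \<open>0 \<le> eta\<close> by simp
  then show ?thesis
    using amp_gauss_le[OF assms(1-5), of y] by (simp add: barrier_def)
qed

lemma barrier_pos_late:
  assumes "0 \<le> del" "0 \<le> L" "s0 \<le> s" "0 \<le> al" "0 \<le> e0" "0 < eta"
    and late: "del \<le> eta * be * (s - sc)"
  shows "0 < barrier y s"
proof -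
  have "eta * (1 + be * (s - sc)) \<le> eta * exp (be * (s - sc))"
    using \<open>0 < eta\<close> exp_ge_add_one_self by simp
  then have "eta + del \<le> eta * exp (be * (s - sc))"
    using late by (simp add: algebra_simps)
  then show ?thesis
    using amp_gauss_le[OF assms(1-5), of y] \<open>0 < eta\<close> by (simp add: barrier_def)
qed

lemma barrier_nonneg_outside:
  assumes "0 \<le> del" "0 \<le> al" "0 \<le> eta" "e0 = exp (-al*r^2)" "0 \<le> r"
    and outside: "r \<le> norm (y - center s)"
  shows "0 \<le> barrier y s"
proof -
  have "r^2 \<le> (norm (y - center s))^2"
    using outside \<open>0 \<le> r\<close> by (simp add: power_mono)
  then have "gauss y s \<le> e0"
    using assms by (simp add: gauss_eq mult_left_mono)
  moreover have "0 \<le> amp s"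
    using \<open>0 \<le> del\<close> by (simp add: amp_def)
  ultimately have "amp s * (gauss y s - e0) \<le> 0"
    by (simp add: mult_nonneg_nonpos)
  moreover have "0 \<le> eta * exp (be * (s - sc))"
    using \<open>0 \<le> eta\<close> by simp
  ultimately show ?thesis
    by (simp add: barrier_def)
qed

lemma dist_to_start:
  assumes "s0 \<le> t" "norm V \<le> Vb"
  shows "dist (x,t) (ys,s0) \<le> norm (x - center t) + (t - s0) * (Vb + 1)"
proof -
  have "norm (x - ys) \<le> norm (x - center t) + norm ((t - s0) *\<^sub>R V)"
    using norm_triangle_ineq[of "x - center t" "(t - s0) *\<^sub>R V"] by (simp add: center_def)
  also have "norm ((t - s0) *\<^sub>R V) \<le> (t - s0) * Vb"
    using assms by (simp add: mult_left_mono)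
  finally show ?thesis
    using dist_Pair_le[of x t ys s0] assms(1) by (simp add: dist_norm dist_real_def algebra_simps)
qed

lemma barrier_pde_strict:
  fixes G :: "real^'n^'n \<Rightarrow> real"
  assumes G: "elliptic_bounds lam Lam G" "G 0 = 0"
    and pos: "0 < al" "0 < del" "0 \<le> eta * be"
    and e0: "e0 = exp (-al*r^2)"
    and ineq: "\<And>nw wv. 0 \<le> nw \<Longrightarrow> nw < r \<Longrightarrow> wv \<le> nw * Vb \<Longrightarrow>
       exp (-al*nw^2) * (2*al*Lam*CARD('n) - 4*al^2*lam*nw^2 + 2*al*wv)
         < L * (exp (-al*nw^2) - exp (-al*r^2))"
    and near: "norm (y - center s) < r" and V: "norm V \<le> Vb"
  shows "G (barrier_hess y s) - barrier_dt y s < 0"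
proof -
  define w where "w = y - center s"
  define A where "A = amp s"
  define E where "E = gauss y s"
  have A: "0 < A" using pos by (simp add: A_def amp_def)
  have E: "E = exp (-al * (norm w)^2)" by (simp add: E_def w_def gauss_eq)
  have Hess: "G (barrier_hess y s) \<le> Lam * (2*al*A*E) * CARD('n) - lam * (4*al^2*A*E) * (w \<bullet> w)"
    unfolding barrier_hess_def A_def E_def w_def
    using pos by (intro elliptic_bounds_id_minus_outer[OF G]) (simp_all add: amp_def gauss_def)
  have "w \<bullet> V \<le> norm w * Vb"
    using norm_cauchy_schwarz[of w V] V mult_left_mono[OF V norm_ge_zero[of w]] by linarith
  then have "E * (2*al*Lam*CARD('n) - 4*al^2*lam*(norm w)^2 + 2*al*(w \<bullet> V)) < L * (E - e0)"
    using ineq[of "norm w" "w \<bullet> V"] near e0 by (simp add: E w_def)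
  then have "A * (E * (2*al*Lam*CARD('n) - 4*al^2*lam*(norm w)^2 + 2*al*(w \<bullet> V))) < A * (L * (E - e0))"
    using A by simp
  moreover have "0 \<le> eta * be * exp (be * (s - sc))"
    using pos by simp
  ultimately show ?thesis
    using Hess by (simp add: barrier_dt_def A_def E_def w_def power2_norm_eq_inner algebra_simps)
qed

lemma barrier_nonneg_off_tube:
  assumes "0 \<le> del" "0 \<le> al" "0 \<le> eta" "e0 = exp (-al*r^2)" "0 \<le> r" "a < t" "t < b"
  shows "\<exists>\<rho>>0. \<forall>y s. (y,s) \<in> ball (x,t) \<rho> \<longrightarrow> (y,s) \<in> tube center r a b \<or> 0 \<le> barrier y s"
proof (intro exI[of _ "min (t - a) (b - t)"] conjI allI impI)
  show "0 < min (t - a) (b - t)"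
    using assms by simp
  fix y s assume "(y,s) \<in> ball (x,t) (min (t - a) (b - t))"
  then have "dist t s < min (t - a) (b - t)"
    using dist_snd_le[of "(x,t)" "(y,s)"] by simp
  then have "a < s" "s < b"
    by (auto simp: dist_real_def)
  then show "(y,s) \<in> tube center r a b \<or> 0 \<le> barrier y s"
    using barrier_nonneg_outside[OF assms(1-5), of y s]
    by (cases "norm (y - center s) \<le> r") (auto simp: tube_def)
qed

lemma barrier_touching_point:
  fixes G :: "real^'n^'n \<Rightarrow> real"
  assumes G: "elliptic_bounds lam Lam G" "G 0 = 0"
    and pos: "0 < al" "0 < del" "0 \<le> L" "0 < eta" "0 < be" "0 < r" "0 < th"
    and th: "eta * be * (th/2) = del"
    and e0: "e0 = exp (-al*r^2)"
    and ineq: "\<And>nw wv. 0 \<le> nw \<Longrightarrow> nw < r \<Longrightarrow> wv \<le> nw * Vb \<Longrightarrow>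
       exp (-al*nw^2) * (2*al*Lam*CARD('n) - 4*al^2*lam*nw^2 + 2*al*wv)
         < L * (exp (-al*nw^2) - exp (-al*r^2))"
    and V: "norm V \<le> Vb"
    and x: "(x,t) \<in> tube center r s0 (sc + th)" "s0 < t" "barrier x t < 0"
  shows "(\<exists>\<rho>>0. \<forall>y s. (y,s) \<in> ball (x,t) \<rho> \<longrightarrow> (y,s) \<in> tube center r s0 (sc + th) \<or> 0 \<le> barrier y s)
    \<and> G (barrier_hess x t) - barrier_dt x t < 0"
proof
  have near: "norm (x - center t) < r"
    using barrier_nonneg_outside[of r x t] x(3) pos e0 by force
  have late: "t < sc + th/2"
  proof (rule ccontr)
    assume "\<not> ?thesis"
    then have "eta * be * (th/2) \<le> eta * be * (t - sc)"
      using pos by (intro mult_left_mono) auto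
    then have "del \<le> eta * be * (t - sc)"
      using th by simp
    then show False
      using barrier_pos_late[of t x] x(2,3) pos e0 by auto
  qed
  show "\<exists>\<rho>>0. \<forall>y s. (y,s) \<in> ball (x,t) \<rho> \<longrightarrow> (y,s) \<in> tube center r s0 (sc + th) \<or> 0 \<le> barrier y s"
    using pos e0 x(2) late by (intro barrier_nonneg_off_tube) auto
  show "G (barrier_hess x t) - barrier_dt x t < 0"
    using barrier_pde_strict[OF G pos(1,2) _ e0 ineq near V] pos by simp
qed

end

lemma isCont_test_fun:
  assumes "test_fun \<phi> Dx Hx Dt p"
  shows "isCont (\<lambda>q. \<phi> (fst q) (snd q)) p"
proof -
  obtain U where "open U" "p \<in> U" "continuous_on U (\<lambda>(y,s). \<phi> y s)"
    using assms unfolding test_fun_def by blast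
  then show ?thesis
    by (simp add: continuous_on_eq_continuous_at case_prod_beta)
qed

lemma visc_sub_barrier_comparison:
  fixes F :: "real^'n \<Rightarrow> real \<Rightarrow> real^'n^'n \<Rightarrow> real"
    and u :: "(real^'n) \<times> real \<Rightarrow> real"
  assumes vs: "visc_sub F Om u" and cu: "continuous_on Om u" and le: "\<forall>q\<in>Om. u q \<le> M"
    and K: "compact K" "K \<subseteq> Om"
    and tfa: "\<And>p. test_fun \<phi> Dx Hx Dt p"
    and cond: "\<And>x t. (x,t) \<in> K \<Longrightarrow> \<phi> x t < 0 \<Longrightarrow> M < u (x,t) - \<phi> x t \<Longrightarrow>
        (\<exists>r>0. \<forall>y s. (y,s) \<in> Om \<longrightarrow> (y,s) \<in> ball (x,t) r \<longrightarrow> (y,s) \<in> K \<or> 0 \<le> \<phi> y s)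
        \<and> F x t (Hx x t) - Dt x t < 0"
  shows "\<forall>x t. (x,t) \<in> K \<longrightarrow> u (x,t) - \<phi> x t \<le> M"
proof (rule ccontr)
  assume "\<not> ?thesis"
  then obtain p0 where p0: "p0 \<in> K" "M < u p0 - \<phi> (fst p0) (snd p0)"
    by auto
  have "continuous_on UNIV (\<lambda>q. \<phi> (fst q) (snd q))"
    using isCont_test_fun[OF tfa] by (simp add: continuous_at_imp_continuous_on)
  then have "continuous_on K (\<lambda>q. u q - \<phi> (fst q) (snd q))"
    using continuous_on_diff continuous_on_subset[OF cu K(2)] continuous_on_subset subset_UNIV
    by metis
  then obtain P where P: "P \<in> K" "\<forall>q\<in>K. u q - \<phi> (fst q) (snd q) \<le> u P - \<phi> (fst P) (snd P)"
    using continuous_attains_sup[OF K(1)] p0(1) by blast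
  obtain x1 t1 where P_eq: "P = (x1,t1)"
    by (cases P)
  have P_max: "\<forall>q\<in>K. u q - \<phi> (fst q) (snd q) \<le> u (x1,t1) - \<phi> x1 t1"
    using P(2) by (simp add: P_eq)
  have big: "M < u (x1,t1) - \<phi> x1 t1"
    using P_max p0 by fastforce
  moreover have "u (x1,t1) \<le> M"
    using le K(2) P(1) by (auto simp: P_eq)
  ultimately have "\<phi> x1 t1 < 0"
    by linarith
  then obtain r where r: "r > 0"
      "\<forall>y s. (y,s) \<in> Om \<longrightarrow> (y,s) \<in> ball (x1,t1) r \<longrightarrow> (y,s) \<in> K \<or> 0 \<le> \<phi> y s"
    and strict: "F x1 t1 (Hx x1 t1) - Dt x1 t1 < 0"
    using cond[OF P(1)[unfolded P_eq] _ big] by blast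
  have "\<forall>(y,s)\<in>Om \<inter> ball (x1,t1) r. u (y,s) - \<phi> y s \<le> u (x1,t1) - \<phi> x1 t1"
  proof (clarify)
    fix y s assume ys: "(y,s) \<in> Om" "(y,s) \<in> ball (x1,t1) r"
    show "u (y,s) - \<phi> y s \<le> u (x1,t1) - \<phi> x1 t1"
    proof (cases "(y,s) \<in> K")
      case True
      then show ?thesis using P_max by fastforce
    next
      case False
      then have "0 \<le> \<phi> y s" using r(2) ys by blast
      moreover have "u (y,s) \<le> M" using le ys by auto
      ultimately show ?thesis using big by linarith
    qed
  qed
  then have "F x1 t1 (Hx x1 t1) - Dt x1 t1 \<ge> 0"
    using vs tfa[of "(x1,t1)"] K(2) P(1) r(1) unfolding visc_sub_def P_eq by blast
  with strict show False by linarith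
qed

lemma (in moving_gaussian) visc_sub_le_barrier_on_tube:
  fixes F :: "real^'n \<Rightarrow> real \<Rightarrow> real^'n^'n \<Rightarrow> real"
    and u :: "(real^'n) \<times> real \<Rightarrow> real"
  assumes vs: "visc_sub F Om u" and cu: "continuous_on Om u" and le: "\<forall>q\<in>Om. u q \<le> M"
    and ell: "\<forall>(x,t)\<in>D. elliptic_bounds lam Lam (F x t)" and F0: "\<forall>(x,t)\<in>D. F x t 0 = 0"
    and DOm: "D \<subseteq> Om" and tube_D: "tube center r s0 (sc + th) \<subseteq> D"
    and low: "\<forall>q\<in>ball (ys,s0) rho. u q < M - del" "r < rho"
    and pos: "0 < al" "0 < del" "0 \<le> L" "0 < eta" "0 < be" "0 < r" "0 < th"
    and th: "eta * be * (th/2) = del"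
    and e0: "e0 = exp (-al*r^2)"
    and ineq: "\<And>nw wv. 0 \<le> nw \<Longrightarrow> nw < r \<Longrightarrow> wv \<le> nw * Vb \<Longrightarrow>
       exp (-al*nw^2) * (2*al*Lam*CARD('n) - 4*al^2*lam*nw^2 + 2*al*wv)
         < L * (exp (-al*nw^2) - exp (-al*r^2))"
    and V: "norm V \<le> Vb"
  shows "\<forall>x t. (x,t) \<in> tube center r s0 (sc + th) \<longrightarrow> u (x,t) - barrier x t \<le> M"
proof (rule visc_sub_barrier_comparison[OF vs cu le _ _ test_fun_barrier])
  have "continuous_on UNIV center"
    unfolding center_def[abs_def] by (intro continuous_intros)
  then show "compact (tube center r s0 (sc + th))"
    by (rule compact_tube)
  show "tube center r s0 (sc + th) \<subseteq> Om"
    using tube_D DOm by blast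
  fix x t assume xK: "(x,t) \<in> tube center r s0 (sc + th)" and neg: "barrier x t < 0"
    and big: "M < u (x,t) - barrier x t"
  have t: "s0 \<le> t" "norm (x - center t) \<le> r"
    using xK by (auto simp: tube_def)
  have "s0 < t"
  proof (rule ccontr)
    assume "\<not> ?thesis"
    with t have "dist (x,t) (ys,s0) < rho"
      using dist_to_start[OF t(1) V, of x] low(2) by simp
    then have "u (x,t) < M - del"
      using low(1) by (simp add: dist_commute)
    then show False
      using neg_barrier_le[of t x] big pos t(1) e0 by auto
  qed
  moreover have "elliptic_bounds lam Lam (F x t)" "F x t 0 = 0"
    using ell F0 tube_D xK by auto
  ultimately show "(\<exists>\<rho>>0. \<forall>y s. (y,s) \<in> Om \<longrightarrow> (y,s) \<in> ball (x,t) \<rho> \<longrightarrow>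
        (y,s) \<in> tube center r s0 (sc + th) \<or> 0 \<le> barrier y s)
      \<and> F x t (barrier_hess x t) - barrier_dt x t < 0"
    using barrier_touching_point[OF _ _ pos th e0 ineq V xK _ neg] by blast
qed

lemma visc_sub_barrier_estimate:
  fixes F :: "real^'n \<Rightarrow> real \<Rightarrow> real^'n^'n \<Rightarrow> real"
    and u :: "(real^'n) \<times> real \<Rightarrow> real"
    and x1 ys :: "real^'n"
  assumes vs: "visc_sub F Om u" and cu: "continuous_on Om u" and le: "\<forall>q\<in>Om. u q \<le> M"
    and DOm: "D \<subseteq> Om"
    and ell: "\<forall>(x,t)\<in>D. elliptic_bounds lam Lam (F x t)" and F0: "\<forall>(x,t)\<in>D. F x t 0 = 0"
    and cylD: "cyl (t1-h) t1 x1 h \<subseteq> D" and ss: "t1 - h < ss"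
    and del: "0 < del" and low: "\<forall>q\<in>ball (ys,ss) rho. u q < M - del"
    and r: "0 < r" "3*r \<le> rho" "r + norm (ys - x1) < h"
    and Vb: "2 * norm (ys - x1) \<le> Vb * (t1 - ss)" "0 \<le> Vb"
    and al: "0 < al" and L: "0 \<le> L"
    and ineq: "\<And>nw wv. 0 \<le> nw \<Longrightarrow> nw < r \<Longrightarrow> wv \<le> nw * Vb \<Longrightarrow>
       exp (-al*nw^2) * (2*al*Lam*CARD('n) - 4*al^2*lam*nw^2 + 2*al*wv)
         < L * (exp (-al*nw^2) - exp (-al*r^2))"
    and sc: "(ss + t1)/2 \<le> sc" "sc < t1"
  shows "u (x1,sc) \<le> M - del * exp (-L*(t1 - ss)) * (1 - exp (-al*r^2)) / 2"
proof -
  define e0 where "e0 = exp (-al*r^2)"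
  define c0 where "c0 = del * exp (-L*(t1 - ss)) * (1 - e0)"
  define V where "V = (1/(sc - ss)) *\<^sub>R (x1 - ys)"
  define th where "th = (t1 - sc)/2"
  define eta where "eta = c0/2"
  define be where "be = 2*del/(eta*th)"
  interpret moving_gaussian ys V ss al del L e0 eta be sc .
  have ss_sc: "ss < sc" "sc - ss \<ge> (t1 - ss)/2"
    using sc by auto
  have e0: "0 < e0" "e0 < 1"
    using al r by (auto simp: e0_def)
  then have eta: "0 < eta"
    using del by (simp add: eta_def c0_def)
  have th: "0 < th" "th \<le> sc - ss"
    using sc by (auto simp: th_def)
  have be: "0 < be" "eta * be * (th/2) = del"
    using del eta th by (auto simp: be_def)
  have V: "norm V \<le> Vb"
  proof -
    have "norm V = norm (ys - x1) / (sc - ss)"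
      using ss_sc by (simp add: V_def norm_minus_commute)
    also have "\<dots> \<le> norm (ys - x1) / ((t1 - ss)/2)"
      using ss_sc sc by (intro divide_left_mono) auto
    also have "\<dots> \<le> Vb"
      using Vb sc ss_sc by (simp add: divide_simps)
    finally show ?thesis .
  qed
  have center_eq: "center = (\<lambda>s. ys + ((s - ss)/(sc - ss)) *\<^sub>R (x1 - ys))"
    by (rule ext) (simp add: center_def, simp add: V_def)
  have "tube center r ss (sc + th) \<subseteq> D"
    using tube_in_cylinder[OF r(3) ss ss_sc(1), of "sc + th"] cylD th sc
    by (simp add: center_eq th_def field_simps)
  then have "\<forall>x t. (x,t) \<in> tube center r ss (sc + th) \<longrightarrow> u (x,t) - barrier x t \<le> M"
    using r del al L eta be th e0_def ineq V
    by (intro visc_sub_le_barrier_on_tube[OF vs cu le ell F0 DOm _ low]) auto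
  moreover have "(x1,sc) \<in> tube center r ss (sc + th)"
    using r th by (simp add: tube_def center_eq)
  ultimately have "u (x1,sc) \<le> M + barrier x1 sc"
    by fastforce
  moreover have "barrier x1 sc = eta - amp sc * (1 - e0)"
    using ss_sc by (simp add: barrier_def gauss_def center_eq)
  moreover have "c0 \<le> amp sc * (1 - e0)"
    using L ss_sc sc e0 del by (auto simp: c0_def amp_def intro!: mult_right_mono mult_left_mono)
  ultimately have "u (x1,sc) \<le> M - c0/2"
    by (simp add: eta_def)
  then show ?thesis
    by (simp add: c0_def e0_def)
qed

lemma visc_sub_below_max_late:
  fixes F :: "real^'n \<Rightarrow> real \<Rightarrow> real^'n^'n \<Rightarrow> real"
    and u :: "(real^'n) \<times> real \<Rightarrow> real"
    and x1 ys :: "real^'n"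
  assumes vs: "visc_sub F Om u" and cu: "continuous_on Om u" and le: "\<forall>q\<in>Om. u q \<le> M"
    and DOm: "D \<subseteq> Om" and oD: "open D"
    and ell: "\<forall>(x,t)\<in>D. elliptic_bounds lam Lam (F x t)" and F0: "\<forall>(x,t)\<in>D. F x t 0 = 0"
    and lam: "0 < lam" "lam \<le> Lam"
    and cylD: "cyl (t1-h) t1 x1 h \<subseteq> D"
    and y: "(ys,ss) \<in> cyl (t1-h) t1 x1 h" "u (ys,ss) < M"
  obtains c0 where "0 < c0" "\<And>sc. (ss + t1)/2 \<le> sc \<Longrightarrow> sc < t1 \<Longrightarrow> u (x1,sc) \<le> M - c0"
proof -
  define del where "del = (M - u (ys,ss))/2"
  have del: "0 < del"
    using y(2) by (simp add: del_def)
  have yD: "(ys,ss) \<in> D"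
    using y(1) cylD by auto
  have "continuous_on D u"
    using continuous_on_subset[OF cu DOm] .
  then obtain rho where rho: "0 < rho" "\<forall>q\<in>ball (ys,ss) rho. u q < M - del"
  proof -
    obtain rho1 where rho1: "0 < rho1" "ball (ys,ss) rho1 \<subseteq> D"
      using oD yD open_contains_ball by blast
    obtain rho2 where rho2: "0 < rho2" "\<forall>q\<in>D. dist q (ys,ss) < rho2 \<longrightarrow> dist (u q) (u (ys,ss)) < del"
      using \<open>continuous_on D u\<close> yD del unfolding continuous_on_iff by blast
    have "u q < M - del" if q: "q \<in> ball (ys,ss) (min rho1 rho2)" for q
    proof -
      have "q \<in> D" "dist q (ys,ss) < rho2"
        using q rho1 by (auto simp: dist_commute)
      then have "u q - u (ys,ss) < del"
        using rho2 by (auto simp: dist_real_def abs_less_iff)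
      then show ?thesis
        by (simp add: del_def field_simps)
    qed
    then show thesis
      using that rho1 rho2 by (metis min_less_iff_conj)
  qed
  have cyl: "norm (ys - x1) < h" "t1 - h < ss" "ss < t1"
    using y(1) by (auto simp: cyl_def dist_norm)
  define r where "r = min (rho/3) ((h - norm (ys - x1))/2)"
  define Vb where "Vb = 2 * norm (ys - x1) / (t1 - ss)"
  have "r \<le> (h - norm (ys - x1))/2"
    unfolding r_def by (rule min.cobounded2)
  then have r: "0 < r" "3*r \<le> rho" "r + norm (ys - x1) < h"
    using rho cyl by (auto simp: r_def)
  have Vb: "2 * norm (ys - x1) \<le> Vb * (t1 - ss)" "0 \<le> Vb"
    using cyl by (auto simp: Vb_def)
  obtain al L where al: "0 < al" "0 < L" and ineq:
    "\<And>nw wv. 0 \<le> nw \<Longrightarrow> nw < r \<Longrightarrow> wv \<le> nw * Vb \<Longrightarrow>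
       exp (-al*nw^2) * (2*al*Lam*CARD('n) - 4*al^2*lam*nw^2 + 2*al*wv)
         < L * (exp (-al*nw^2) - exp (-al*r^2))"
    using gaussian_barrier_constants[of lam Lam "real CARD('n)" r Vb] lam r Vb by auto
  show thesis
  proof (rule that)
    show "0 < del * exp (-L*(t1 - ss)) * (1 - exp (-al*r^2)) / 2"
      using del al r by simp
    fix sc assume "(ss + t1)/2 \<le> sc" "sc < t1"
    then show "u (x1,sc) \<le> M - del * exp (-L*(t1 - ss)) * (1 - exp (-al*r^2)) / 2"
      using visc_sub_barrier_estimate[OF vs cu le DOm ell F0 cylD cyl(2) del rho(2) r Vb al(1)
            less_imp_le[OF al(2)]] ineq by blast
  qed
qed

lemma visc_sub_max_spreads_below:
  fixes F :: "real^'n \<Rightarrow> real \<Rightarrow> real^'n^'n \<Rightarrow> real"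
    and u :: "(real^'n) \<times> real \<Rightarrow> real"
  assumes vs: "visc_sub F Om u" and cu: "continuous_on Om u" and le: "\<forall>q\<in>Om. u q \<le> M"
    and DOm: "D \<subseteq> Om" and oD: "open D"
    and ell: "\<forall>(x,t)\<in>D. elliptic_bounds lam Lam (F x t)" and F0: "\<forall>(x,t)\<in>D. F x t 0 = 0"
    and lam: "0 < lam" "lam \<le> Lam"
    and h: "0 < h" and cylD: "cyl (t1-h) t1 x1 h \<subseteq> D"
    and p: "(x1,t1) \<in> Om" "u (x1,t1) = M"
    and y: "(ys,ss) \<in> cyl (t1-h) t1 x1 h"
  shows "u (ys,ss) = M"
proof (rule ccontr)
  assume "u (ys,ss) \<noteq> M"
  then have "u (ys,ss) < M"
    using le DOm cylD y by force
  then obtain c0 where c0: "0 < c0" and below: "\<And>sc. (ss + t1)/2 \<le> sc \<Longrightarrow> sc < t1 \<Longrightarrow> u (x1,sc) \<le> M - c0"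
    using visc_sub_below_max_late[OF vs cu le DOm oD ell F0 lam cylD y] by blast
  obtain d where d: "0 < d" "\<forall>q\<in>Om. dist q (x1,t1) < d \<longrightarrow> dist (u q) (u (x1,t1)) < c0"
    using cu p(1) c0 unfolding continuous_on_iff by blast
  define sc where "sc = max ((ss + t1)/2) (t1 - d/2)"
  have y_time: "t1 - h < ss" "ss < t1"
    using y by (auto simp: cyl_def)
  have sc: "(ss + t1)/2 \<le> sc" "sc < t1" "t1 - h < sc"
    using y_time d by (auto simp: sc_def less_max_iff_disj)
  then have "(x1,sc) \<in> cyl (t1-h) t1 x1 h"
    using h by (simp add: cyl_def)
  then have "(x1,sc) \<in> Om"
    using cylD DOm by blast
  moreover have "dist (x1,sc) (x1,t1) < d"
    using sc d by (auto simp: dist_Pair_Pair dist_real_def sc_def)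
  ultimately have "dist (u (x1,sc)) M < c0"
    using d p by auto
  with below[OF sc(1,2)] show False
    by (simp add: dist_real_def abs_less_iff)
qed

lemma time_graph_const_below:
  fixes u :: "(real^'n) \<times> real \<Rightarrow> real" and c :: "real \<Rightarrow> (real^'n) \<times> real"
  assumes loc: "\<And>x t. (x,t) \<in> Om \<Longrightarrow> u (x,t) = M \<Longrightarrow> \<exists>h>0. \<forall>y s. (y,s) \<in> cyl (t-h) t x h \<longrightarrow> u (y,s) = M"
    and cc: "continuous_on {a..b} c" and cO: "c ` {a..b} \<subseteq> Om" and cs: "\<forall>t\<in>{a..b}. snd (c t) = t"
    and th: "a < th" "th \<le> b" and uth: "u (c th) = M"
  obtains t' where "a \<le> t'" "t' < th" "\<forall>\<sigma>\<in>{t'..th}. u (c \<sigma>) = M"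
proof -
  obtain x where cth: "c th = (x, th)"
    using cs th by (metis prod.collapse atLeastAtMost_iff less_imp_le)
  have "(x,th) \<in> Om"
    using cO th cth by (metis atLeastAtMost_iff image_subset_iff less_imp_le)
  then obtain h where h: "0 < h" "\<forall>y s. (y,s) \<in> cyl (th-h) th x h \<longrightarrow> u (y,s) = M"
    using loc uth cth by metis
  obtain ep where ep: "0 < ep" "\<forall>\<sigma>\<in>{a..b}. dist \<sigma> th < ep \<longrightarrow> dist (c \<sigma>) (c th) < h"
    using cc th h(1) unfolding continuous_on_iff by (metis atLeastAtMost_iff less_imp_le)
  define t' where "t' = max a (th - min ep h / 2)"
  show thesis
  proof (rule that)
    show "a \<le> t'" "t' < th"
      using th ep h by (auto simp: t'_def)
    show "\<forall>\<sigma>\<in>{t'..th}. u (c \<sigma>) = M"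
    proof
      fix \<sigma> assume \<sigma>: "\<sigma> \<in> {t'..th}"
      show "u (c \<sigma>) = M"
      proof (cases "\<sigma> = th")
        case True
        with uth show ?thesis by simp
      next
        case False
        have "\<sigma> \<in> {a..b}" "dist \<sigma> th < ep" "th - h < \<sigma>" "\<sigma> < th"
          using \<sigma> False th ep h by (auto simp: t'_def dist_real_def)
        moreover obtain y where cy: "c \<sigma> = (y, \<sigma>)"
          using cs \<open>\<sigma> \<in> {a..b}\<close> by (metis prod.collapse)
        ultimately have "dist y x < h"
          using ep(2) dist_fst_le[of "c \<sigma>" "c th"] cth by fastforce
        then show ?thesis
          using h(2) cy \<open>th - h < \<sigma>\<close> \<open>\<sigma> < th\<close> by (auto simp: cyl_def)
      qed
    qed
  qed
qed

lemma const_along_time_graph: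
  fixes u :: "(real^'n) \<times> real \<Rightarrow> real" and c :: "real \<Rightarrow> (real^'n) \<times> real"
  assumes loc: "\<And>x t. (x,t) \<in> Om \<Longrightarrow> u (x,t) = M \<Longrightarrow> \<exists>h>0. \<forall>y s. (y,s) \<in> cyl (t-h) t x h \<longrightarrow> u (y,s) = M"
    and cc: "continuous_on {a..b} c" and cO: "c ` {a..b} \<subseteq> Om" and cs: "\<forall>t\<in>{a..b}. snd (c t) = t"
    and cu: "continuous_on Om u" and ab: "a \<le> b" and ub: "u (c b) = M"
  shows "u (c a) = M"
proof -
  define A where "A = {t\<in>{a..b}. \<forall>\<sigma>\<in>{t..b}. u (c \<sigma>) = M}"
  define th where "th = Inf A"
  have "b \<in> A" "bdd_below A"
    using ub ab by (auto simp: A_def bdd_below_def)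
  then have th: "a \<le> th" "th \<le> b"
    by (auto simp: th_def A_def intro!: cInf_greatest cInf_lower)
  have above: "u (c \<sigma>) = M" if \<sigma>: "\<sigma> \<in> {th<..b}" for \<sigma>
  proof -
    obtain t where "t \<in> A" "t < \<sigma>"
      using \<sigma> cInf_less_iff[of A \<sigma>] \<open>b \<in> A\<close> \<open>bdd_below A\<close> by (auto simp: th_def)
    then show ?thesis
      using \<sigma> by (auto simp: A_def)
  qed
  have uth: "u (c th) = M"
  proof (cases "th = b")
    case True
    with ub show ?thesis by simp
  next
    case False
    then have "closure {th<..b} = {th..b}"
      using th by simp
    moreover have "continuous_on {th..b} (u \<circ> c)"
      using continuous_on_subset[OF continuous_on_compose[OF cc continuous_on_subset[OF cu cO]]] th
      by auto
    ultimately show ?thesis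
      using continuous_constant_on_closure[of "{th<..b}" "u \<circ> c" M th] above th by auto
  qed
  have "th = a"
  proof (rule ccontr)
    assume "th \<noteq> a"
    then obtain t' where t': "a \<le> t'" "t' < th" "\<forall>\<sigma>\<in>{t'..th}. u (c \<sigma>) = M"
      using time_graph_const_below[OF loc cc cO cs _ th(2) uth] th(1) by (metis order_le_less)
    then have "t' \<in> A"
      using above th by (force simp: A_def)
    then show False
      using \<open>bdd_below A\<close> t'(2) cInf_lower[of t' A] by (simp add: th_def)
  qed
  with uth show ?thesis by simp
qed

lemma broken_line_singleton: "broken_line [a] = {a}"
  by (simp add: broken_line_def)

lemma broken_line_Cons_Cons:
  "broken_line (a # b # ps) = closed_segment a b \<union> broken_line (b # ps)"
proof -
  have "(\<Union>i<length (a#b#ps) - 1. closed_segment ((a#b#ps) ! i) ((a#b#ps) ! Suc i))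
      = closed_segment a b \<union> (\<Union>i<length (b#ps) - 1. closed_segment ((b#ps) ! i) ((b#ps) ! Suc i))"
    by (simp add: lessThan_Suc_eq_insert_0 image_Suc_lessThan[symmetric] del: image_Suc_lessThan)
  then show ?thesis
    unfolding broken_line_def by auto
qed

lemma connected_broken_line:
  "ps \<noteq> [] \<Longrightarrow> connected (broken_line (ps :: ('a::real_normed_vector) list))"
proof (induction ps rule: induct_list012)
  case (2 x)
  then show ?case by (simp add: broken_line_singleton)
next
  case (3 a b ps)
  have "b \<in> closed_segment a b \<inter> broken_line (b # ps)"
    by (simp add: broken_line_def)
  then show ?case
    unfolding broken_line_Cons_Cons using 3 by (intro connected_Un) auto
qed simp

lemma compact_broken_line: "compact (broken_line (ps :: ('a::euclidean_space) list))"
  unfolding broken_line_def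
  by (intro compact_Un finite_imp_compact compact_UN compact_segment finite_lessThan finite_set)

lemma hd_last_in_broken_line: "ps \<noteq> [] \<Longrightarrow> hd ps \<in> broken_line ps \<and> last ps \<in> broken_line ps"
  by (simp add: broken_line_def)

lemma broken_line_time_graph:
  fixes ps :: "('a::euclidean_space \<times> real) list"
  assumes "ps \<noteq> []" "inj_on snd (broken_line ps)"
  obtains g where "continuous_on {snd (hd ps)..snd (last ps)} g"
    "g ` {snd (hd ps)..snd (last ps)} \<subseteq> broken_line ps"
    "\<forall>t\<in>{snd (hd ps)..snd (last ps)}. snd (g t) = t"
    "g (snd (hd ps)) = hd ps" "g (snd (last ps)) = last ps"
proof -
  let ?L = "broken_line ps"
  obtain g where g: "homeomorphism ?L (snd ` ?L) snd g"
    using homeomorphism_compact[OF compact_broken_line continuous_on_snd[OF continuous_on_id] refl assms(2)] by blast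
  have "connected (snd ` ?L)"
    using connected_broken_line[OF assms(1)] by (intro connected_continuous_image continuous_intros)
  then have I: "{snd (hd ps)..snd (last ps)} \<subseteq> snd ` ?L"
    using hd_last_in_broken_line[OF assms(1)] by (intro connected_contains_Icc) auto
  have gc: "continuous_on (snd ` ?L) g" and gs: "\<forall>y\<in>snd ` ?L. snd (g y) = y"
    and gi: "\<forall>x\<in>?L. g (snd x) = x" and gim: "g ` snd ` ?L = ?L"
    using g by (auto simp: homeomorphism_def)
  show thesis
  proof (rule that)
    show "continuous_on {snd (hd ps)..snd (last ps)} g"
      using continuous_on_subset[OF gc I] .
    show "g ` {snd (hd ps)..snd (last ps)} \<subseteq> ?L"
      using I gim by blast
    show "\<forall>t\<in>{snd (hd ps)..snd (last ps)}. snd (g t) = t"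
      using I gs by blast
    show "g (snd (hd ps)) = hd ps" "g (snd (last ps)) = last ps"
      using gi hd_last_in_broken_line[OF assms(1)] by blast+
  qed
qed

lemma cylinder_below_in_domain:
  fixes D :: "((real^'n) \<times> real) set"
  assumes "open D" and p: "(x,t) \<in> D \<union> upper_base D"
  obtains h where "0 < h" "cyl (t-h) t x h \<subseteq> D"
proof (cases "(x,t) \<in> D")
  case True
  then obtain e where e: "0 < e" "ball (x,t) e \<subseteq> D"
    using \<open>open D\<close> open_contains_ball by blast
  have "cyl (t - e/2) t x (e/2) \<subseteq> ball (x,t) e"
  proof
    fix q assume "q \<in> cyl (t - e/2) t x (e/2)"
    then obtain y s where "q = (y,s)" "dist y x < e/2" "t - e/2 < s" "s < t"
      by (auto simp: cyl_def)
    then show "q \<in> ball (x,t) e"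
      using dist_Pair_le[of x t y s] by (simp add: dist_commute dist_real_def)
  qed
  with e that[of "e/2"] show thesis by auto
next
  case False
  with p that show thesis
    unfolding upper_base_def by auto
qed

lemma strong_max_principle_visc_sub:
  fixes D :: "((real^'n) \<times> real) set"
    and F :: "real^'n \<Rightarrow> real \<Rightarrow> real^'n^'n \<Rightarrow> real"
    and u :: "(real^'n) \<times> real \<Rightarrow> real"
  assumes oD: "open D" and lam: "0 < lam" "lam \<le> Lam"
    and ell: "\<forall>(x,t)\<in>D. elliptic_bounds lam Lam (F x t)" and F0: "\<forall>(x,t)\<in>D. F x t 0 = 0"
    and cu: "continuous_on (D \<union> upper_base D) u"
    and vs: "visc_sub F (D \<union> upper_base D) u" and le: "\<forall>q\<in>D \<union> upper_base D. u q \<le> M"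
    and up: "u p0 = M"
  shows "\<forall>q\<in>subordinate D p0. u q = M"
proof
  let ?Om = "D \<union> upper_base D"
  have loc: "\<exists>h>0. \<forall>y s. (y,s) \<in> cyl (t-h) t x h \<longrightarrow> u (y,s) = M"
    if xt: "(x,t) \<in> ?Om" "u (x,t) = M" for x t
  proof -
    obtain h where "0 < h" "cyl (t-h) t x h \<subseteq> D"
      using cylinder_below_in_domain[OF oD xt(1)] .
    then show ?thesis
      using visc_sub_max_spreads_below[OF vs cu le _ oD ell F0 lam] xt by blast
  qed
  fix q assume "q \<in> subordinate D p0"
  then obtain ps where ps: "ps \<noteq> []" "hd ps = q" "last ps = p0" "broken_line ps \<subseteq> ?Om"
      "inj_on snd (broken_line ps)" "snd q \<le> snd p0"
    unfolding subordinate_def by blast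
  obtain g where g: "continuous_on {snd q..snd p0} g" "g ` {snd q..snd p0} \<subseteq> broken_line ps"
      "\<forall>t\<in>{snd q..snd p0}. snd (g t) = t" "g (snd q) = q" "g (snd p0) = p0"
    using broken_line_time_graph[OF ps(1,5), unfolded ps(2,3)] by blast
  have gO: "g ` {snd q..snd p0} \<subseteq> ?Om"
    using g(2) ps(4) by blast
  have "u (g (snd p0)) = M"
    using g(5) up by simp
  then have "u (g (snd q)) = M"
    using const_along_time_graph[OF loc g(1) gO g(3) cu ps(6)] by simp
  with g(4) show "u q = M" by simp
qed

lemma test_fun_uminus:
  assumes "test_fun \<phi> Dx Hx Dt p"
  shows "test_fun (\<lambda>y s. - \<phi> y s) (\<lambda>y s. - Dx y s) (\<lambda>y s. - Hx y s) (\<lambda>y s. - Dt y s) p"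
proof -
  obtain U where U: "open U" "p \<in> U"
    "\<forall>(y,s)\<in>U. ((\<lambda>z. \<phi> z s) has_derivative (\<lambda>v. Dx y s \<bullet> v)) (at y) \<and>
        ((\<lambda>z. Dx z s) has_derivative (\<lambda>v. Hx y s *v v)) (at y) \<and>
        ((\<lambda>r. \<phi> y r) has_real_derivative Dt y s) (at s)"
    "continuous_on U (\<lambda>(y,s). \<phi> y s)" "continuous_on U (\<lambda>(y,s). Dx y s)"
    "continuous_on U (\<lambda>(y,s). Hx y s)" "continuous_on U (\<lambda>(y,s). Dt y s)"
    using assms unfolding test_fun_def by blast
  have neg_mult: "(- H) *v v = - (H *v v)" for H :: "real^'n^'n" and v
    by (simp add: matrix_vector_mult_def vec_eq_iff sum_negf)
  show ?thesis
    unfolding test_fun_def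
  proof (intro exI[of _ U] conjI ballI)
    fix q assume "q \<in> U"
    then obtain y s where q: "q = (y,s)" "(y,s) \<in> U"
      by (metis prod.collapse)
    then have d: "((\<lambda>z. \<phi> z s) has_derivative (\<lambda>v. Dx y s \<bullet> v)) (at y)"
        "((\<lambda>z. Dx z s) has_derivative (\<lambda>v. Hx y s *v v)) (at y)"
        "((\<lambda>r. \<phi> y r) has_real_derivative Dt y s) (at s)"
      using U(3) by auto
    show "case q of (y,s) \<Rightarrow> ((\<lambda>z. - \<phi> z s) has_derivative (\<lambda>v. - Dx y s \<bullet> v)) (at y) \<and>
        ((\<lambda>z. - Dx z s) has_derivative (\<lambda>v. - Hx y s *v v)) (at y) \<and>
        ((\<lambda>r. - \<phi> y r) has_real_derivative - Dt y s) (at s)"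
      using has_derivative_minus[OF d(1)] has_derivative_minus[OF d(2)] DERIV_minus[OF d(3)]
      by (simp add: q neg_mult)
  next
    show "continuous_on U (\<lambda>(y,s). - \<phi> y s)" "continuous_on U (\<lambda>(y,s). - Dx y s)"
      "continuous_on U (\<lambda>(y,s). - Hx y s)" "continuous_on U (\<lambda>(y,s). - Dt y s)"
      using continuous_on_minus[OF U(4)] continuous_on_minus[OF U(5)]
        continuous_on_minus[OF U(6)] continuous_on_minus[OF U(7)]
      by (simp_all add: split_def)
  qed (use U in auto)
qed

lemma visc_super_imp_visc_sub_uminus:
  assumes "visc_super F Om u"
  shows "visc_sub (\<lambda>x t X. - F x t (- X)) Om (\<lambda>q. - u q)"
  unfolding visc_sub_def
proof (intro allI impI)
  fix x0 t0 \<phi> Dx Hx Dt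
  assume "(x0,t0) \<in> Om" and tf: "test_fun \<phi> Dx Hx Dt (x0,t0)"
    and "\<exists>r>0. \<forall>(y,s)\<in>Om \<inter> ball (x0,t0) r. - u (y,s) - \<phi> y s \<le> - u (x0,t0) - \<phi> x0 t0"
  moreover note test_fun_uminus[OF tf]
  moreover have "- u (y,s) - \<phi> y s \<le> - u (x0,t0) - \<phi> x0 t0 \<longleftrightarrow>
      u (y,s) - - \<phi> y s \<ge> u (x0,t0) - - \<phi> x0 t0" for y s
    by linarith
  ultimately have "F x0 t0 (- Hx x0 t0) - (- Dt x0 t0) \<le> 0"
    using assms unfolding visc_super_def by blast
  then show "0 \<le> - F x0 t0 (- Hx x0 t0) - Dt x0 t0"
    by simp
qed

theorem theorem3p4:
  fixes D :: "((real^'n) \<times> real) set"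
    and F :: "real^'n \<Rightarrow> real \<Rightarrow> real^'n^'n \<Rightarrow> real"
    and u :: "(real^'n) \<times> real \<Rightarrow> real"
    and lam Lam M t0 :: real and x0 :: "real^'n"
  assumes "open D" and "connected D"
    and "0 < lam" and "lam \<le> Lam"
    and "\<forall>(x,t)\<in>D. \<forall>X N. symmetric_mat X \<longrightarrow> symmetric_mat N \<longrightarrow> psd N \<longrightarrow>
            lam * trace N \<le> F x t (X + N) - F x t X \<and> F x t (X + N) - F x t X \<le> Lam * trace N"
    and "\<forall>(x,t)\<in>D. F x t 0 = 0"
    and "continuous_on (D \<union> upper_base D) u"
    and "(x0,t0) \<in> D \<union> upper_base D"
    and "u (x0,t0) = M"
  shows "(visc_sub F (D \<union> upper_base D) u \<and> (\<forall>q\<in>D \<union> upper_base D. u q \<le> M)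
            \<longrightarrow> (\<forall>q\<in>subordinate D (x0,t0). u q = M))
       \<and> (visc_super F (D \<union> upper_base D) u \<and> (\<forall>q\<in>D \<union> upper_base D. u q \<ge> M)
            \<longrightarrow> (\<forall>q\<in>subordinate D (x0,t0). u q = M))"
proof (intro conjI impI)
  have ell: "\<forall>(x,t)\<in>D. elliptic_bounds lam Lam (F x t)"
    using assms(5) unfolding elliptic_bounds_def .
  assume "visc_sub F (D \<union> upper_base D) u \<and> (\<forall>q\<in>D \<union> upper_base D. u q \<le> M)"
  then show "\<forall>q\<in>subordinate D (x0,t0). u q = M"
    using strong_max_principle_visc_sub[OF assms(1,3,4) ell assms(6,7)] assms(9) by blast
next
  have ell_dual: "\<forall>(x,t)\<in>D. elliptic_bounds lam Lam (\<lambda>X. - F x t (- X))"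
    using assms(5) elliptic_bounds_dual unfolding elliptic_bounds_def by fast
  assume super: "visc_super F (D \<union> upper_base D) u \<and> (\<forall>q\<in>D \<union> upper_base D. u q \<ge> M)"
  have "\<forall>(x,t)\<in>D. - F x t (- 0) = 0"
    using assms(6) by auto
  moreover have "\<forall>q\<in>D \<union> upper_base D. - u q \<le> - M"
    using super by auto
  ultimately have "\<forall>q\<in>subordinate D (x0,t0). - u q = - M"
    using strong_max_principle_visc_sub[OF assms(1,3,4) ell_dual _ continuous_on_minus[OF assms(7)]
        visc_super_imp_visc_sub_uminus] super assms(9) by blast
  then show "\<forall>q\<in>subordinate D (x0,t0). u q = M"
    by simp
qed

end
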